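(* Let $A$ be a normed vector space over $\mathbb C$ and give $A^\vee$ the topology of uniform convergence on compact sets. Then on $\mathrm{Max}\,A$ the lower Vietoris topology coincides with the topology generated by the sets $\{V\in\mathrm{Max}\,A: F(V)\cap K'=\emptyset\}$ with $K'\subset A^\vee$ compact.
   Context: $\mathrm{Max}\,A$ is the set of closed subspaces of $A$; its lower Vietoris topology is generated by $\{V:V\cap U\ne\emptyset\}$, $U\subset A$ open. $A^\vee$ is the continuous dual with subbasis $\{\phi:\phi(K)\subset U\}$, $K\subset A$ compact, $U\subset\mathbb C$ open; $F(V)=\{\phi\in A^\vee:\phi|_V=0\}$. *)

theory Defs
  imports "HOL-Analysis.Analysis"
begin

text \<open>Complex vector spaces (HOL only provides real ones): a real vector space
  with a complex scalar multiplication extending the real one.\<close>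

class complex_vector = real_vector +
  fixes scaleC :: "complex \<Rightarrow> 'a \<Rightarrow> 'a"
  assumes scaleC_add_right: "scaleC a (x + y) = scaleC a x + scaleC a y"
    and scaleC_add_left: "scaleC (a + b) x = scaleC a x + scaleC b x"
    and scaleC_scaleC: "scaleC a (scaleC b x) = scaleC (a * b) x"
    and scaleC_one: "scaleC 1 x = x"
    and scaleR_scaleC: "scaleR r x = scaleC (complex_of_real r) x"

class complex_normed_vector = complex_vector + real_normed_vector +
  assumes norm_scaleC: "norm (scaleC a x) = cmod a * norm x"

definition csubspace :: "'a::complex_vector set \<Rightarrow> bool" where
  "csubspace V \<longleftrightarrow> 0 \<in> V \<and> (\<forall>x\<in>V. \<forall>y\<in>V. x + y \<in> V) \<and> (\<forall>c. \<forall>x\<in>V. scaleC c x \<in> V)"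

definition MaxA :: "'a::complex_normed_vector set set" where
  "MaxA = {V. closed V \<and> csubspace V}"

definition clinear_fun :: "('a::complex_vector \<Rightarrow> complex) \<Rightarrow> bool" where
  "clinear_fun f \<longleftrightarrow> (\<forall>x y. f (x + y) = f x + f y) \<and> (\<forall>c x. f (scaleC c x) = c * f x)"

definition cdual :: "('a::complex_normed_vector \<Rightarrow> complex) set" where
  "cdual = {\<phi>. clinear_fun \<phi> \<and> continuous_on UNIV \<phi>}"

text \<open>Topology of uniform convergence on compact sets (compact-open topology) on
  A-dual, with subbasis {\<phi>. \<phi>(K) \<subseteq> U}, K compact in A, U open in \<complex>.\<close>
definition dual_topology :: "('a::complex_normed_vector \<Rightarrow> complex) topology" where
  "dual_topology = topology_generated_by
     {{\<phi>\<in>cdual. \<phi> ` K \<subseteq> U} | K U. compact K \<and> open U}"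

definition annih :: "'a::complex_normed_vector set \<Rightarrow> ('a \<Rightarrow> complex) set" where
  "annih V = {\<phi>\<in>cdual. \<forall>v\<in>V. \<phi> v = 0}"

definition lower_vietoris :: "'a::complex_normed_vector set topology" where
  "lower_vietoris = topology_generated_by {{V\<in>MaxA. V \<inter> U \<noteq> {}} | U. open U}"

definition annih_topology :: "'a::complex_normed_vector set topology" where
  "annih_topology = topology_generated_by
     {{V\<in>MaxA. annih V \<inter> K' = {}} | K'. compactin dual_topology K'}"

end

(*
  Both topologies on Max A are given by subbases, so it suffices to show that each subbasic set
  of one is open in the other.

  Hitting sets: let x be in V0 and ball x r inside U. By Hahn-Banach, every closed subspace V
  missing ball x r is annihilated by some functional phi with phi x = 1 and norm at most 1/r.
  The set K' of all such functionals is compact in the compact-open topology (Banach-Alaoglu),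
  so {V. F(V) misses K'} is a neighbourhood of V0 inside {V. V meets U}.

  Conversely, a compact K' in the dual is uniformly bounded by some M. If F(V0) misses K', each
  phi in K' exceeds 1 in modulus at some point of V0; compactness yields finitely many such
  points v, and every V meeting all the balls ball v (1/M) still has F(V) disjoint from K'.
*)

theory Submission
  imports Defs
begin

section \<open>Complex-linear functionals\<close>

lemma scaleC_zero_left [simp]: "scaleC 0 x = (0::'a::complex_vector)"
  by (metis scaleR_scaleC scaleR_zero_left of_real_0)

lemma scaleC_minus_one: "scaleC (-1) x = - (x::'a::complex_vector)"
  by (metis scaleR_scaleC scaleR_minus1_left of_real_1 of_real_minus)

lemma scaleC_minus_left: "scaleC (- a) x = - scaleC a (x::'a::complex_vector)"
  using scaleC_scaleC[of "-1" a x] by (simp add: scaleC_minus_one)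

lemma scaleC_diff_right: "scaleC a (x - y) = scaleC a x - scaleC a (y::'a::complex_vector)"
  by (metis scaleC_add_right diff_add_cancel eq_diff_eq)

lemma scaleC_eq_Re_Im: "scaleC c (x::'a::complex_vector) = Re c *\<^sub>R x + Im c *\<^sub>R scaleC \<i> x"
proof -
  have "c = complex_of_real (Re c) + complex_of_real (Im c) * \<i>"
    by (simp add: complex_eq_iff)
  then have "scaleC c x = scaleC (complex_of_real (Re c)) x + scaleC (complex_of_real (Im c) * \<i>) x"
    by (metis scaleC_add_left)
  then show ?thesis
    by (simp add: scaleR_scaleC scaleC_scaleC)
qed

lemma clinear_fun_add: "clinear_fun f \<Longrightarrow> f (x + y) = f x + f y"
  unfolding clinear_fun_def by blast

lemma clinear_fun_scaleC: "clinear_fun f \<Longrightarrow> f (scaleC c x) = c * f x"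
  unfolding clinear_fun_def by blast

lemma clinear_fun_diff: "clinear_fun f \<Longrightarrow> f (x - y) = f x - f y"
  using clinear_fun_add[of f x "scaleC (-1) y"] clinear_fun_scaleC[of f "-1" y]
  by (simp add: scaleC_minus_one)

lemma clinear_fun_zero: "clinear_fun f \<Longrightarrow> f 0 = 0"
  using clinear_fun_diff[of f 0 0] by simp

lemma clinear_fun_scaleR: "clinear_fun f \<Longrightarrow> f (r *\<^sub>R x) = complex_of_real r * f x"
  by (simp add: scaleR_scaleC clinear_fun_scaleC)

lemma clinear_fun_bounded_imp_continuous:
  fixes f :: "'a::complex_normed_vector \<Rightarrow> complex"
  assumes f: "clinear_fun f" and bound: "\<And>y. cmod (f y) \<le> C * norm y"
  shows "continuous_on UNIV f"
proof (rule lipschitz_on_continuous_on[of "\<bar>C\<bar>"], rule lipschitz_onI)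
  fix x y :: 'a
  have "cmod (f (x - y)) \<le> \<bar>C\<bar> * norm (x - y)"
    using bound[of "x - y"] by (metis abs_ge_self mult_right_mono norm_ge_zero order_trans)
  then show "dist (f x) (f y) \<le> \<bar>C\<bar> * dist x y"
    by (simp add: dist_norm clinear_fun_diff[OF f])
qed simp

lemma csubspace_0: "csubspace V \<Longrightarrow> 0 \<in> V"
  and csubspace_add: "csubspace V \<Longrightarrow> v \<in> V \<Longrightarrow> w \<in> V \<Longrightarrow> v + w \<in> V"
  and csubspace_scaleC: "csubspace V \<Longrightarrow> v \<in> V \<Longrightarrow> scaleC c v \<in> V"
  unfolding csubspace_def by blast+

section \<open>The Hahn--Banach theorem\<close>

definition sublinear :: "('a::real_vector \<Rightarrow> real) \<Rightarrow> bool" where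
  "sublinear p \<longleftrightarrow> (\<forall>x y. p (x + y) \<le> p x + p y) \<and> (\<forall>r x. 0 \<le> r \<longrightarrow> p (r *\<^sub>R x) = r * p x)"

lemma sublinear_add: "sublinear p \<Longrightarrow> p (x + y) \<le> p x + p y"
  and sublinear_scaleR: "sublinear p \<Longrightarrow> 0 \<le> r \<Longrightarrow> p (r *\<^sub>R x) = r * p x"
  unfolding sublinear_def by blast+

lemma sublinear_zero: "sublinear p \<Longrightarrow> p 0 = 0"
  using sublinear_scaleR[of p 0 0] by simp

lemma sublinear_scaled_norm: "0 \<le> c \<Longrightarrow> sublinear (\<lambda>x. c * norm x)"
  unfolding sublinear_def by (auto simp: distrib_left[symmetric] mult_left_mono norm_triangle_ineq)

text \<open>Partial linear functionals dominated by \<open>p\<close>, encoded by their graphs.\<close>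
definition dominated_graph :: "('a::real_vector \<Rightarrow> real) \<Rightarrow> ('a \<times> real) set \<Rightarrow> bool" where
  "dominated_graph p G \<longleftrightarrow> subspace G \<and> (\<forall>(a, s)\<in>G. s \<le> p a)"

lemma dominated_graph_bound: "dominated_graph p G \<Longrightarrow> (a, s) \<in> G \<Longrightarrow> s \<le> p a"
  unfolding dominated_graph_def by blast

lemma dominated_graph_subspace: "dominated_graph p G \<Longrightarrow> subspace G"
  unfolding dominated_graph_def by blast

lemma dominated_graph_functional:
  assumes G: "dominated_graph p G" and p: "sublinear p" and "(a, s) \<in> G" "(a, t) \<in> G"
  shows "s = t"
proof -
  have "(0, s - t) \<in> G" "(0, t - s) \<in> G"
    using subspace_diff[OF dominated_graph_subspace[OF G]] assms(3,4) by force+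
  then have "s - t \<le> p 0" "t - s \<le> p 0"
    using dominated_graph_bound[OF G] by blast+
  then show ?thesis
    using sublinear_zero[OF p] by simp
qed

definition graph_extension :: "('a::real_vector \<times> real) set \<Rightarrow> 'a \<Rightarrow> real \<Rightarrow> ('a \<times> real) set" where
  "graph_extension G z \<alpha> = {(a + r *\<^sub>R z, s + r * \<alpha>) | a s r. (a, s) \<in> G}"

lemma subspace_graph_extension:
  assumes G: "subspace G"
  shows "subspace (graph_extension G z \<alpha>)"
proof (rule subspaceI)
  have "(0 + 0 *\<^sub>R z, 0 + 0 * \<alpha>) \<in> graph_extension G z \<alpha>"
    unfolding graph_extension_def using subspace_0[OF G] by (force simp: zero_prod_def)
  then show "0 \<in> graph_extension G z \<alpha>"
    by (simp add: zero_prod_def)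
next
  fix x y assume "x \<in> graph_extension G z \<alpha>" "y \<in> graph_extension G z \<alpha>"
  then obtain a s r b t q where "x = (a + r *\<^sub>R z, s + r * \<alpha>)" "(a, s) \<in> G"
    and "y = (b + q *\<^sub>R z, t + q * \<alpha>)" "(b, t) \<in> G"
    unfolding graph_extension_def by blast
  then have "x + y = ((a + b) + (r + q) *\<^sub>R z, (s + t) + (r + q) * \<alpha>)"
    by (simp add: algebra_simps)
  moreover have "(a + b, s + t) \<in> G"
    using subspace_add[OF G \<open>(a, s) \<in> G\<close> \<open>(b, t) \<in> G\<close>] by simp
  ultimately show "x + y \<in> graph_extension G z \<alpha>"
    unfolding graph_extension_def by blast
next
  fix c x assume "x \<in> graph_extension G z \<alpha>"
  then obtain a s r where "x = (a + r *\<^sub>R z, s + r * \<alpha>)" "(a, s) \<in> G"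
    unfolding graph_extension_def by blast
  then have "c *\<^sub>R x = (c *\<^sub>R a + (c * r) *\<^sub>R z, c * s + (c * r) * \<alpha>)"
    by (simp add: algebra_simps)
  moreover have "(c *\<^sub>R a, c * s) \<in> G"
    using subspace_scale[OF G \<open>(a, s) \<in> G\<close>, of c] by simp
  ultimately show "c *\<^sub>R x \<in> graph_extension G z \<alpha>"
    unfolding graph_extension_def by blast
qed

text \<open>The bounds on \<open>\<alpha>\<close> are exactly what makes \<open>s + r \<alpha> \<le> p (a + r z)\<close> hold after rescaling
  by \<open>|r|\<close>: the upper bound for \<open>r > 0\<close>, the lower bound for \<open>r < 0\<close>.\<close>
lemma dominated_graph_extension:
  assumes G: "dominated_graph p G" and p: "sublinear p"
    and lo: "\<And>a s. (a, s) \<in> G \<Longrightarrow> s - p (a - z) \<le> \<alpha>"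
    and hi: "\<And>a s. (a, s) \<in> G \<Longrightarrow> \<alpha> \<le> p (a + z) - s"
  shows "dominated_graph p (graph_extension G z \<alpha>)"
proof -
  have sG: "subspace G"
    using G by (rule dominated_graph_subspace)
  have "s + r * \<alpha> \<le> p (a + r *\<^sub>R z)" if "(a, s) \<in> G" for a s r
  proof (cases r "0::real" rule: linorder_cases)
    case less
    define q where "q = - 1 / r"
    have "(q *\<^sub>R a, q * s) \<in> G"
      using subspace_scale[OF sG that, of q] by simp
    from mult_left_mono[OF lo[OF this], of "- r"] less
    have "s - (- r) * p (q *\<^sub>R a - z) \<le> - r * \<alpha>"
      by (simp add: q_def algebra_simps)
    moreover have "(- r) *\<^sub>R (q *\<^sub>R a - z) = a + r *\<^sub>R z"
      using less by (simp add: q_def algebra_simps)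
    ultimately show ?thesis
      using sublinear_scaleR[OF p, of "- r" "q *\<^sub>R a - z"] less by simp
  next
    case equal
    then show ?thesis
      using dominated_graph_bound[OF G that] by simp
  next
    case greater
    have "((1 / r) *\<^sub>R a, (1 / r) * s) \<in> G"
      using subspace_scale[OF sG that, of "1 / r"] by simp
    from mult_left_mono[OF hi[OF this], of r] greater
    have "r * \<alpha> \<le> r * p ((1 / r) *\<^sub>R a + z) - s"
      by (simp add: algebra_simps)
    moreover have "r *\<^sub>R ((1 / r) *\<^sub>R a + z) = a + r *\<^sub>R z"
      using greater by (simp add: algebra_simps)
    ultimately show ?thesis
      using sublinear_scaleR[OF p, of r "(1 / r) *\<^sub>R a + z"] greater by simp
  qed
  then show ?thesis
    unfolding dominated_graph_def graph_extension_def using subspace_graph_extension[OF sG]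
    by (auto simp: graph_extension_def)
qed

lemma dominated_graph_extension_value:
  assumes G: "dominated_graph p G" and p: "sublinear p"
  obtains \<alpha> where "\<And>a s. (a, s) \<in> G \<Longrightarrow> s - p (a - z) \<le> \<alpha>"
    and "\<And>a s. (a, s) \<in> G \<Longrightarrow> \<alpha> \<le> p (a + z) - s"
proof -
  have sG: "subspace G"
    using G by (rule dominated_graph_subspace)
  have key: "s - p (a - z) \<le> p (b + z) - t" if "(a, s) \<in> G" "(b, t) \<in> G" for a s b t
  proof -
    have "(a + b, s + t) \<in> G"
      using subspace_add[OF sG that] by simp
    then have "s + t \<le> p ((a - z) + (b + z))"
      using dominated_graph_bound[OF G] by simp
    also have "\<dots> \<le> p (a - z) + p (b + z)"
      by (rule sublinear_add[OF p])
    finally show ?thesis by simp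
  qed
  have "(0, 0) \<in> G"
    using subspace_0[OF sG] by (simp add: zero_prod_def)
  then have bdd: "bdd_above ((\<lambda>(a, s). s - p (a - z)) ` G)"
    using key[of _ _ 0 0] by (auto intro: bdd_aboveI2[where M = "p z"])
  show ?thesis
  proof
    show "s - p (a - z) \<le> (SUP (a, s)\<in>G. s - p (a - z))" if "(a, s) \<in> G" for a s
      by (rule cSUP_upper2[OF bdd that]) simp
    show "(SUP (a, s)\<in>G. s - p (a - z)) \<le> p (b + z) - t" if "(b, t) \<in> G" for b t
      using key[OF _ that] \<open>(0, 0) \<in> G\<close> by (auto intro: cSUP_least)
  qed
qed

lemma dominated_graph_extend:
  assumes G: "dominated_graph p G" and p: "sublinear p" and z: "\<forall>s. (z, s) \<notin> G"
  shows "\<exists>G'. dominated_graph p G' \<and> G \<subset> G'"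
proof -
  obtain \<alpha> where lo: "\<And>a s. (a, s) \<in> G \<Longrightarrow> s - p (a - z) \<le> \<alpha>"
    and hi: "\<And>a s. (a, s) \<in> G \<Longrightarrow> \<alpha> \<le> p (a + z) - s"
    using dominated_graph_extension_value[OF G p] by metis
  have "(a + 0 *\<^sub>R z, s + 0 * \<alpha>) \<in> graph_extension G z \<alpha>" if "(a, s) \<in> G" for a s
    unfolding graph_extension_def using that by blast
  then have "G \<subseteq> graph_extension G z \<alpha>"
    by auto
  moreover have "(0 + 1 *\<^sub>R z, 0 + 1 * \<alpha>) \<in> graph_extension G z \<alpha>"
    unfolding graph_extension_def using subspace_0[OF dominated_graph_subspace[OF G]]
    by (force simp: zero_prod_def)
  ultimately show ?thesis
    using dominated_graph_extension[OF G p lo hi] z by auto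
qed

lemma dominated_graph_chain_Union:
  assumes "\<C> \<noteq> {}" and chain: "subset.chain {G. dominated_graph p G} \<C>"
  shows "dominated_graph p (\<Union>\<C>)"
proof -
  have mem: "subspace G \<and> (\<forall>(a, s)\<in>G. s \<le> p a)" if "G \<in> \<C>" for G
    using chain that unfolding subset_chain_def dominated_graph_def by blast
  have "subspace (\<Union>\<C>)"
  proof (rule subspaceI)
    show "0 \<in> \<Union>\<C>"
      using \<open>\<C> \<noteq> {}\<close> mem subspace_0 by blast
  next
    fix x y assume "x \<in> \<Union>\<C>" "y \<in> \<Union>\<C>"
    then obtain G H where "G \<in> \<C>" "H \<in> \<C>" "x \<in> G" "y \<in> H"
      by blast
    moreover have "G \<subseteq> H \<or> H \<subseteq> G"
      using chain calculation(1,2) unfolding subset_chain_def by blast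
    ultimately show "x + y \<in> \<Union>\<C>"
      using mem subspace_add by blast
  next
    fix c x assume "x \<in> \<Union>\<C>"
    then show "c *\<^sub>R x \<in> \<Union>\<C>"
      using mem subspace_scale by blast
  qed
  then show ?thesis
    unfolding dominated_graph_def using mem by blast
qed

lemma dominated_graph_total_imp_linear:
  assumes M: "dominated_graph p M" and p: "sublinear p" and total: "\<And>a. \<exists>s. (a, s) \<in> M"
  obtains f where "linear f" "\<And>a. (a, f a) \<in> M"
proof -
  obtain f where graph: "\<And>a. (a, f a) \<in> M"
    using total by metis
  have f_eq: "f a = s" if "(a, s) \<in> M" for a s
    using dominated_graph_functional[OF M p graph that] .
  have "linear f"
  proof (rule linearI)
    show "f (a + b) = f a + f b" for a b
      using f_eq subspace_add[OF dominated_graph_subspace[OF M] graph graph] by simp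
    show "f (c *\<^sub>R a) = c *\<^sub>R f a" for c a
      using f_eq subspace_scale[OF dominated_graph_subspace[OF M] graph] by simp
  qed
  then show thesis
    using that graph by blast
qed

theorem real_Hahn_Banach:
  fixes p :: "'a::real_vector \<Rightarrow> real"
  assumes p: "sublinear p" and G0: "dominated_graph p G0"
  shows "\<exists>f. linear f \<and> (\<forall>(a, s)\<in>G0. f a = s) \<and> (\<forall>a. f a \<le> p a)"
proof -
  define \<A> where "\<A> = {G. G0 \<subseteq> G \<and> dominated_graph p G}"
  have "\<exists>M\<in>\<A>. \<forall>G\<in>\<A>. M \<subseteq> G \<longrightarrow> G = M"
  proof (rule subset_Zorn_nonempty)
    show "\<A> \<noteq> {}"
      using G0 \<A>_def by blast
  next
    fix \<C> assume "\<C> \<noteq> {}" and chain: "subset.chain \<A> \<C>"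
    then have "subset.chain {G. dominated_graph p G} \<C>"
      unfolding subset_chain_def \<A>_def by blast
    with \<open>\<C> \<noteq> {}\<close> have "dominated_graph p (\<Union>\<C>)"
      by (rule dominated_graph_chain_Union)
    moreover have "G0 \<subseteq> \<Union>\<C>"
      using \<open>\<C> \<noteq> {}\<close> chain unfolding subset_chain_def \<A>_def by blast
    ultimately show "\<Union>\<C> \<in> \<A>"
      unfolding \<A>_def by blast
  qed
  then obtain M where "M \<in> \<A>" and maximal: "\<And>G. G \<in> \<A> \<Longrightarrow> M \<subseteq> G \<Longrightarrow> G = M"
    by blast
  then have M: "dominated_graph p M" and "G0 \<subseteq> M"
    unfolding \<A>_def by blast+
  have "\<exists>s. (a, s) \<in> M" for a
  proof (rule ccontr)
    assume "\<nexists>s. (a, s) \<in> M"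
    then obtain G where "dominated_graph p G" "M \<subset> G"
      using dominated_graph_extend[OF M p] by blast
    then show False
      using maximal[of G] \<open>G0 \<subseteq> M\<close> unfolding \<A>_def by blast
  qed
  then obtain f where "linear f" and graph: "\<And>a. (a, f a) \<in> M"
    using dominated_graph_total_imp_linear[OF M p] by blast
  then show ?thesis
    using dominated_graph_functional[OF M p graph] \<open>G0 \<subseteq> M\<close> dominated_graph_bound[OF M graph]
    by blast
qed

definition complexify :: "('a::complex_vector \<Rightarrow> real) \<Rightarrow> 'a \<Rightarrow> complex" where
  "complexify u x = complex_of_real (u x) - \<i> * complex_of_real (u (scaleC \<i> x))"

lemma Re_complexify [simp]: "Re (complexify u x) = u x"
  by (simp add: complexify_def)

lemma clinear_fun_complexify:
  assumes u: "linear u"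
  shows "clinear_fun (complexify u)"
  unfolding clinear_fun_def
proof (intro conjI allI)
  show "complexify u (x + y) = complexify u x + complexify u y" for x y
    by (simp add: complexify_def linear_add[OF u] scaleC_add_right algebra_simps)
  show "complexify u (scaleC c x) = c * complexify u x" for c x
  proof -
    have "u (scaleC c x) = Re c * u x + Im c * u (scaleC \<i> x)"
      by (simp add: scaleC_eq_Re_Im[of c x] linear_add[OF u] linear_scale[OF u])
    moreover have "scaleC \<i> (scaleC c x) = Re c *\<^sub>R scaleC \<i> x - Im c *\<^sub>R x"
      using scaleC_eq_Re_Im[of "\<i> * c" x]
      by (simp add: scaleC_scaleC scaleC_minus_left scaleR_scaleC)
    then have "u (scaleC \<i> (scaleC c x)) = Re c * u (scaleC \<i> x) - Im c * u x"
      by (simp add: linear_diff[OF u] linear_scale[OF u])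
    ultimately show ?thesis
      by (simp add: complexify_def complex_eq_iff algebra_simps)
  qed
qed

lemma clinear_fun_norm_bound_from_Re:
  fixes f :: "'a::complex_normed_vector \<Rightarrow> complex"
  assumes f: "clinear_fun f" and Re_bound: "\<And>y. Re (f y) \<le> C * norm y"
  shows "cmod (f y) \<le> C * norm y"
proof (cases "f y = 0")
  case True
  then show ?thesis
    using Re_bound[of y] by simp
next
  case False
  define k where "k = cnj (f y) / cmod (f y)"
  have "f (scaleC k y) = cmod (f y)"
    using False
    by (simp add: k_def clinear_fun_scaleC[OF f] field_simps complex_norm_square[symmetric] power2_eq_square)
  moreover have "norm (scaleC k y) = norm y"
    using False by (simp add: k_def norm_scaleC norm_divide)
  ultimately show ?thesis
    using Re_bound[of "scaleC k y"] by simp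
qed

lemma norm_add_scaleC_ge_distance:
  fixes x :: "'a::complex_normed_vector"
  assumes V: "csubspace V" and far: "\<forall>v\<in>V. r \<le> norm (x - v)" and "v \<in> V"
  shows "cmod c * r \<le> norm (v + scaleC c x)"
proof (cases "c = 0")
  case True
  then show ?thesis by simp
next
  case False
  define w where "w = scaleC (- 1 / c) v"
  have "w \<in> V"
    unfolding w_def using csubspace_scaleC[OF V \<open>v \<in> V\<close>] .
  have "scaleC c w = - v"
    using False by (simp add: w_def scaleC_scaleC scaleC_minus_one)
  then have "v + scaleC c x = scaleC c (x - w)"
    by (simp add: scaleC_diff_right)
  then have "norm (v + scaleC c x) = cmod c * norm (x - w)"
    by (simp add: norm_scaleC)
  then show ?thesis
    using far \<open>w \<in> V\<close> by (simp add: mult_left_mono)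
qed

lemma complexify_in_cdual:
  fixes u :: "'a::complex_normed_vector \<Rightarrow> real"
  assumes u: "linear u" and bound: "\<And>a. u a \<le> C * norm a"
  shows "complexify u \<in> cdual" and "cmod (complexify u y) \<le> C * norm y"
proof -
  have lin: "clinear_fun (complexify u)"
    using u by (rule clinear_fun_complexify)
  have "cmod (complexify u y) \<le> C * norm y" for y
    by (rule clinear_fun_norm_bound_from_Re[OF lin]) (simp add: bound)
  then show "complexify u \<in> cdual" and "cmod (complexify u y) \<le> C * norm y"
    unfolding cdual_def using lin clinear_fun_bounded_imp_continuous[OF lin] by blast+
qed

lemma subspace_Re_coordinate_graph:
  assumes V: "csubspace V"
  shows "subspace {(v + scaleC c x, Re c) | v c. v \<in> V}" (is "subspace ?G")
proof (rule subspaceI)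
  have "(0 + scaleC 0 x, Re 0) \<in> ?G"
    using csubspace_0[OF V] by blast
  then show "0 \<in> ?G"
    by (simp add: zero_prod_def)
next
  fix a b assume "a \<in> ?G" "b \<in> ?G"
  then obtain v c w d where "v \<in> V" "w \<in> V"
    and "a = (v + scaleC c x, Re c)" "b = (w + scaleC d x, Re d)"
    by blast
  then have "a + b = ((v + w) + scaleC (c + d) x, Re (c + d))"
    by (simp add: scaleC_add_left algebra_simps)
  then show "a + b \<in> ?G"
    using csubspace_add[OF V \<open>v \<in> V\<close> \<open>w \<in> V\<close>] by blast
next
  fix t a assume "a \<in> ?G"
  then obtain v c where "v \<in> V" and "a = (v + scaleC c x, Re c)"
    by blast
  then have "t *\<^sub>R a = (scaleC (complex_of_real t) v + scaleC (complex_of_real t * c) x,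
      Re (complex_of_real t * c))"
    by (simp add: scaleR_scaleC scaleC_add_right scaleC_scaleC)
  then show "t *\<^sub>R a \<in> ?G"
    using csubspace_scaleC[OF V \<open>v \<in> V\<close>, of "complex_of_real t"] by blast
qed

lemma dominated_Re_coordinate_graph:
  fixes x :: "'a::complex_normed_vector"
  assumes V: "csubspace V" and "r > 0" and far: "\<forall>v\<in>V. r \<le> norm (x - v)"
  shows "dominated_graph (\<lambda>a. (1 / r) * norm a) {(v + scaleC c x, Re c) | v c. v \<in> V}"
proof -
  have "s \<le> (1 / r) * norm a" if G: "(a, s) \<in> {(v + scaleC c x, Re c) | v c. v \<in> V}" for a s
  proof -
    obtain v c where "v \<in> V" "a = v + scaleC c x" "s = Re c"
      using G by blast
    then have "cmod c * r \<le> norm a"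
      using norm_add_scaleC_ge_distance[OF V far] by blast
    have "r * Re c \<le> r * cmod c"
      using \<open>r > 0\<close> complex_Re_le_cmod[of c] by (intro mult_left_mono) auto
    also have "\<dots> \<le> norm a"
      using \<open>cmod c * r \<le> norm a\<close> by (simp add: mult.commute)
    finally show ?thesis
      using \<open>r > 0\<close> \<open>s = Re c\<close> by (simp add: field_simps)
  qed
  then show ?thesis
    unfolding dominated_graph_def using subspace_Re_coordinate_graph[OF V] by blast
qed

text \<open>Hahn--Banach extends \<open>v + c x \<mapsto> Re c\<close> from \<open>V \<oplus> \<complex>x\<close>; its complexification is the
  separating functional.\<close>
theorem cdual_separating_point_from_csubspace:
  fixes x :: "'a::complex_normed_vector"
  assumes V: "csubspace V" and "r > 0" and far: "\<forall>v\<in>V. r \<le> norm (x - v)"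
  shows "\<exists>\<phi>\<in>cdual. \<phi> x = 1 \<and> (\<forall>v\<in>V. \<phi> v = 0) \<and> (\<forall>y. cmod (\<phi> y) \<le> (1 / r) * norm y)"
proof -
  have "sublinear (\<lambda>a. (1 / r) * norm a)"
    using \<open>r > 0\<close> by (intro sublinear_scaled_norm) simp
  then obtain u where u: "linear u" and u_graph: "\<forall>(a, s)\<in>{(v + scaleC c x, Re c) | v c. v \<in> V}. u a = s"
    and u_bound: "\<And>a. u a \<le> (1 / r) * norm a"
    using real_Hahn_Banach dominated_Re_coordinate_graph[OF assms] by blast
  have u_eq: "u (v + scaleC c x) = Re c" if "v \<in> V" for v c
  proof -
    have "(v + scaleC c x, Re c) \<in> {(v + scaleC c x, Re c) | v c. v \<in> V}"
      using that by blast
    from bspec[OF u_graph this] show ?thesis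
      by simp
  qed
  have "complexify u x = 1"
    using u_eq[OF csubspace_0[OF V], of 1] u_eq[OF csubspace_0[OF V], of \<i>]
    by (simp add: complexify_def scaleC_one)
  moreover have "complexify u v = 0" if "v \<in> V" for v
    using u_eq[OF that, of 0] u_eq[OF csubspace_scaleC[OF V that, of \<i>], of 0]
    by (simp add: complexify_def)
  ultimately show ?thesis
    using complexify_in_cdual[OF u u_bound] by blast
qed

section \<open>Compact sets in the dual\<close>

lemma topspace_dual_topology: "topspace dual_topology = cdual"
proof -
  have "{\<phi>\<in>cdual. \<phi> ` {} \<subseteq> UNIV} \<in> {{\<phi>\<in>cdual. \<phi> ` K \<subseteq> U} | K U. compact K \<and> open U}"
    by blast
  then show ?thesis
    unfolding dual_topology_def topology_generated_by_topspace by auto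
qed

lemma openin_dual_topology_subbasic:
  "compact K \<Longrightarrow> open U \<Longrightarrow> openin dual_topology {\<phi>\<in>cdual. \<phi> ` K \<subseteq> U}"
  unfolding dual_topology_def by (rule topology_generated_by_Basis) blast

lemma compactin_dual_subset_cdual: "compactin dual_topology K' \<Longrightarrow> K' \<subseteq> cdual"
  using compactin_subset_topspace topspace_dual_topology by blast

lemma cdual_clinear_fun: "\<phi> \<in> cdual \<Longrightarrow> clinear_fun \<phi>"
  and cdual_continuous: "\<phi> \<in> cdual \<Longrightarrow> continuous_on UNIV \<phi>"
  unfolding cdual_def by blast+

lemma compact_image_margin:
  fixes f :: "'a::topological_space \<Rightarrow> 'b::heine_borel"
  assumes "continuous_on K f" "compact K" "open U" "f ` K \<subseteq> U"
  obtains \<epsilon> where "\<epsilon> > 0" "\<And>k w. k \<in> K \<Longrightarrow> dist (f k) w < \<epsilon> \<Longrightarrow> w \<in> U"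
proof -
  have "compact (f ` K)" "f ` K \<inter> - U = {}"
    using assms compact_continuous_image by blast+
  then obtain \<epsilon> where "\<epsilon> > 0" "\<forall>a\<in>f ` K. \<forall>w\<in>- U. \<epsilon> \<le> dist a w"
    using separate_compact_closed closed_Compl[OF \<open>open U\<close>] by metis
  then show thesis
    using that[of \<epsilon>] by force
qed

lemma dist_clinear_fun_apply_le:
  fixes f g :: "'a::complex_normed_vector \<Rightarrow> complex"
  assumes f: "clinear_fun f" "\<And>y. cmod (f y) \<le> C * norm y"
    and g: "clinear_fun g" "\<And>y. cmod (g y) \<le> C * norm y"
  shows "dist (f k) (g k) \<le> dist (f i) (g i) + 2 * C * dist k i"
proof -
  have "dist (f k) (g k) = cmod (f (k - i) + (f i - g i) - g (k - i))"
    by (simp add: dist_norm clinear_fun_diff[OF f(1)] clinear_fun_diff[OF g(1)])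
  also have "\<dots> \<le> cmod (f (k - i) + (f i - g i)) + cmod (g (k - i))"
    by (rule norm_triangle_ineq4)
  also have "\<dots> \<le> cmod (f (k - i)) + dist (f i) (g i) + cmod (g (k - i))"
    using norm_triangle_ineq[of "f (k - i)" "f i - g i"] by (simp add: dist_norm)
  also have "\<dots> \<le> dist (f i) (g i) + 2 * C * dist k i"
    using f(2)[of "k - i"] g(2)[of "k - i"] by (simp add: dist_norm)
  finally show ?thesis .
qed

text \<open>On a set of uniformly bounded functionals, a pointwise neighbourhood of \<open>f0\<close> that controls
  \<open>f0\<close> on a finite \<open>\<eta>\<close>-net of \<open>K\<close> already controls it uniformly on \<open>K\<close>.\<close>
lemma equibounded_pointwise_nhd_subset_compact_open:
  fixes P :: "('a::complex_normed_vector \<Rightarrow> complex) set"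
  assumes P: "P \<subseteq> cdual" and bound: "\<forall>f\<in>P. \<forall>y. cmod (f y) \<le> C * norm y"
    and "f0 \<in> P" and K: "compact K" and "open U" and f0K: "f0 ` K \<subseteq> U"
  shows "\<exists>W. open W \<and> f0 \<in> W \<and> (\<forall>f\<in>W \<inter> P. f ` K \<subseteq> U)"
proof -
  have "f0 \<in> cdual"
    using \<open>f0 \<in> P\<close> P by blast
  then obtain \<epsilon> where "\<epsilon> > 0" and \<epsilon>: "\<And>k w. k \<in> K \<Longrightarrow> dist (f0 k) w < \<epsilon> \<Longrightarrow> w \<in> U"
    using compact_image_margin[OF continuous_on_subset[OF cdual_continuous subset_UNIV] K \<open>open U\<close> f0K]
    by blast
  define \<eta> where "\<eta> = \<epsilon> / (3 * (\<bar>C\<bar> + 1))"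
  have "\<eta> > 0"
    using \<open>\<epsilon> > 0\<close> by (simp add: \<eta>_def)
  have "\<bar>C\<bar> * \<eta> < \<epsilon> / 3"
    using \<open>\<epsilon> > 0\<close> by (simp add: \<eta>_def field_simps)
  obtain D where "finite D" and net: "K \<subseteq> (\<Union>i\<in>D. ball i \<eta>)"
    using compactE_image[OF K, of K "\<lambda>k. ball k \<eta>"] \<open>\<eta> > 0\<close> by (metis UN_I centre_in_ball open_ball subsetI)
  define W where "W = (\<Inter>i\<in>D. {f. dist (f0 i) (f i) < \<epsilon> / 3})"
  have "open W"
    unfolding W_def using \<open>finite D\<close>
    by (intro open_INT ballI open_Collect_less continuous_intros) simp_all
  moreover have "f0 \<in> W"
    using \<open>\<epsilon> > 0\<close> by (simp add: W_def)
  moreover have "\<forall>f\<in>W \<inter> P. f ` K \<subseteq> U"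
  proof (intro ballI image_subsetI, rule ccontr)
    fix f k assume f: "f \<in> W \<inter> P" and "k \<in> K" and "f k \<notin> U"
    obtain i where "i \<in> D" "dist i k < \<eta>"
      using net \<open>k \<in> K\<close> by auto
    have "dist (f0 k) (f k) \<le> dist (f0 i) (f i) + 2 * C * dist k i"
      using P bound \<open>f0 \<in> P\<close> f cdual_clinear_fun
      by (intro dist_clinear_fun_apply_le) blast+
    also have "\<dots> < \<epsilon> / 3 + 2 * \<epsilon> / 3"
    proof -
      have "C * dist k i \<le> \<bar>C\<bar> * \<eta>"
        using \<open>dist i k < \<eta>\<close> by (intro mult_mono) (auto simp: dist_commute)
      moreover have "dist (f0 i) (f i) < \<epsilon> / 3"
        using \<open>i \<in> D\<close> f unfolding W_def by blast
      ultimately show ?thesis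
        using \<open>\<bar>C\<bar> * \<eta> < \<epsilon> / 3\<close> by linarith
    qed
    finally show False
      using \<epsilon>[OF \<open>k \<in> K\<close>] \<open>f k \<notin> U\<close> by simp
  qed
  ultimately show ?thesis
    by blast
qed

text \<open>The topology of \<open>top_of_set P\<close> is that of pointwise convergence: the standard topology on
  a function type is the product topology.\<close>
lemma continuous_map_equibounded_into_dual:
  fixes P :: "('a::complex_normed_vector \<Rightarrow> complex) set"
  assumes P: "P \<subseteq> cdual" and bound: "\<forall>f\<in>P. \<forall>y. cmod (f y) \<le> C * norm y"
  shows "continuous_map (top_of_set P) dual_topology id"
  unfolding dual_topology_def
proof (rule continuous_on_generated_topo)
  have "id ` topspace (top_of_set P) \<subseteq> topspace dual_topology"
    using P by (simp add: topspace_dual_topology)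
  then show "id ` topspace (top_of_set P) \<subseteq> \<Union>{{\<phi>\<in>cdual. \<phi> ` K \<subseteq> U} | K U. compact K \<and> open U}"
    by (simp only: dual_topology_def topology_generated_by_topspace)
next
  fix S :: "('a \<Rightarrow> complex) set" assume "S \<in> {{\<phi>\<in>cdual. \<phi> ` K \<subseteq> U} | K U. compact K \<and> open U}"
  then obtain K U where S: "S = {\<phi>\<in>cdual. \<phi> ` K \<subseteq> U}" and "compact K" "open U"
    by blast
  have "openin (top_of_set P) (P \<inter> S)"
  proof (subst openin_subopen, intro ballI)
    fix f0 assume "f0 \<in> P \<inter> S"
    then have "f0 \<in> P" "f0 ` K \<subseteq> U"
      using S by blast+
    then obtain W where "open W" "f0 \<in> W" and W: "\<forall>f\<in>W \<inter> P. f ` K \<subseteq> U"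
      using equibounded_pointwise_nhd_subset_compact_open[OF P bound _ \<open>compact K\<close> \<open>open U\<close>] by blast
    have "openin (top_of_set P) (P \<inter> W)"
      using \<open>open W\<close> by (rule openin_open_Int)
    moreover have "P \<inter> W \<subseteq> P \<inter> S"
      using W P unfolding S by blast
    ultimately show "\<exists>T. openin (top_of_set P) T \<and> f0 \<in> T \<and> T \<subseteq> P \<inter> S"
      using \<open>f0 \<in> P\<close> \<open>f0 \<in> W\<close> by blast
  qed
  moreover have "id -` S \<inter> topspace (top_of_set P) = P \<inter> S"
    by auto
  ultimately show "openin (top_of_set P) (id -` S \<inter> topspace (top_of_set P))"
    by simp
qed

text \<open>A Banach--Alaoglu argument: the set is closed in a Tychonoff product of discs, and on it the
  product topology is finer than the dual topology.\<close>
lemma compactin_dual_normalized_equibounded: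
  fixes x :: "'a::complex_normed_vector"
  assumes "C \<ge> 0"
  shows "compactin dual_topology {\<phi>\<in>cdual. \<phi> x = 1 \<and> (\<forall>y. cmod (\<phi> y) \<le> C * norm y)}"
    (is "compactin _ ?P")
proof -
  define B :: "('a \<Rightarrow> complex) set" where "B = PiE UNIV (\<lambda>y. cball 0 (C * norm y))"
  define L :: "('a \<Rightarrow> complex) set" where "L = {f. clinear_fun f \<and> f x = 1}"
  have "compactin (product_topology (\<lambda>_. euclidean) UNIV) B"
    unfolding B_def compactin_PiE by simp
  then have "compact B"
    by (simp add: euclidean_product_topology)
  have coord: "continuous_on UNIV (\<lambda>f::'a \<Rightarrow> complex. f a)" for a
    by simp
  have "closed L"
    unfolding L_def clinear_fun_def
    by (intro closed_Collect_conj closed_Collect_all closed_Collect_eq continuous_on_add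
        continuous_on_mult continuous_on_const coord)
  have "L \<inter> B = ?P"
    using clinear_fun_bounded_imp_continuous
    by (auto simp: L_def B_def cdual_def PiE_UNIV_domain Pi_def)
  then have "compactin (top_of_set ?P) ?P"
    using closed_Int_compact[OF \<open>closed L\<close> \<open>compact B\<close>] by (simp add: compactin_subtopology)
  moreover have "continuous_map (top_of_set ?P) dual_topology id"
    by (rule continuous_map_equibounded_into_dual[of _ C]) auto
  ultimately show ?thesis
    using image_compactin by fastforce
qed

lemma compactin_incseq_cover:
  fixes g :: "nat \<Rightarrow> 'a set"
  assumes "compactin X S" "\<And>n. openin X (g n)" "incseq g" "S \<subseteq> (\<Union>n. g n)"
  obtains n where "S \<subseteq> g n"
proof -
  obtain F where "finite F" "F \<subseteq> range g" "S \<subseteq> \<Union>F"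
    using compactinD[OF assms(1), of "range g"] assms(2,4) by blast
  then obtain I where "finite I" "S \<subseteq> (\<Union>n\<in>I. g n)"
    using finite_subset_image[of F g UNIV] by blast
  moreover have "g n \<subseteq> g (Max (insert 0 I))" if "n \<in> I" for n
    using that \<open>finite I\<close> \<open>incseq g\<close> by (simp add: incseqD)
  ultimately show thesis
    using that by blast
qed

lemma compactin_dual_bounded_on_compact:
  fixes K' :: "('a::complex_normed_vector \<Rightarrow> complex) set"
  assumes K': "compactin dual_topology K'" and K: "compact K"
  shows "\<exists>B. \<forall>\<phi>\<in>K'. \<forall>k\<in>K. cmod (\<phi> k) \<le> B"
proof -
  define g where "g n = {\<phi>\<in>cdual. \<phi> ` K \<subseteq> ball 0 (real n)}" for n :: nat
  have "openin dual_topology (g n)" for n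
    unfolding g_def using K by (intro openin_dual_topology_subbasic) auto
  moreover have "K' \<subseteq> (\<Union>n. g n)"
  proof
    fix \<phi> assume "\<phi> \<in> K'"
    then have "\<phi> \<in> cdual"
      using compactin_dual_subset_cdual[OF K'] by blast
    then have "compact (\<phi> ` K)"
      using compact_continuous_image[OF continuous_on_subset[OF cdual_continuous subset_UNIV] K] by blast
    then obtain B where "\<forall>w\<in>\<phi> ` K. norm w \<le> B"
      using compact_imp_bounded bounded_iff by blast
    moreover obtain n :: nat where "B < real n"
      using reals_Archimedean2 by blast
    ultimately have "\<phi> ` K \<subseteq> ball 0 (real n)"
      by fastforce
    then have "\<phi> \<in> g n"
      using \<open>\<phi> \<in> cdual\<close> by (simp add: g_def)
    then show "\<phi> \<in> (\<Union>n. g n)"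
      by blast
  qed
  moreover have "incseq g"
    unfolding g_def by (intro monoI) (auto simp: subset_eq)
  ultimately obtain n where "K' \<subseteq> g n"
    using compactin_incseq_cover[OF K'] by blast
  then have "\<forall>\<phi>\<in>K'. \<forall>k\<in>K. cmod (\<phi> k) \<le> real n"
    unfolding g_def by (force simp: less_imp_le)
  then show ?thesis
    by blast
qed

lemma clinear_fun_large_on_short_vector:
  fixes \<phi> :: "'a::complex_normed_vector \<Rightarrow> complex"
  assumes \<phi>: "clinear_fun \<phi>" and "t > 0" and large: "t\<^sup>2 * norm y < cmod (\<phi> y)"
  shows "\<exists>z. norm z = 1 / t \<and> t < cmod (\<phi> z)"
proof -
  have "y \<noteq> 0"
    using large clinear_fun_zero[OF \<phi>] by auto
  define z where "z = (1 / (t * norm y)) *\<^sub>R y"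
  have "norm z = 1 / t"
    using \<open>y \<noteq> 0\<close> \<open>t > 0\<close> by (simp add: z_def)
  moreover have "cmod (\<phi> z) = cmod (\<phi> y) / (t * norm y)"
    using \<open>y \<noteq> 0\<close> \<open>t > 0\<close> by (simp add: z_def clinear_fun_scaleR[OF \<phi>] norm_mult norm_divide)
  moreover have "t * (t * norm y) < cmod (\<phi> y)"
    using large by (simp add: power2_eq_square mult.assoc)
  ultimately show ?thesis
    using \<open>y \<noteq> 0\<close> \<open>t > 0\<close> by (auto simp: pos_less_divide_eq)
qed

text \<open>Equicontinuity of compact subsets of the dual: otherwise functionals of \<open>K'\<close> would be
  unbounded on the compact set formed by a null sequence and its limit.\<close>
lemma compactin_dual_equibounded:
  fixes K' :: "('a::complex_normed_vector \<Rightarrow> complex) set"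
  assumes K': "compactin dual_topology K'"
  shows "\<exists>M>0. \<forall>\<phi>\<in>K'. \<forall>y. cmod (\<phi> y) \<le> M * norm y"
proof (rule ccontr)
  assume unbounded: "\<not> ?thesis"
  have "\<exists>\<phi>\<in>K'. \<exists>z. norm z = 1 / (real n + 1) \<and> real n + 1 < cmod (\<phi> z)" for n :: nat
  proof -
    have "(real n + 1)\<^sup>2 > 0"
      by simp
    then obtain \<phi> y where "\<phi> \<in> K'" "(real n + 1)\<^sup>2 * norm y < cmod (\<phi> y)"
      using unbounded by (meson not_le)
    moreover have "clinear_fun \<phi>"
      using \<open>\<phi> \<in> K'\<close> compactin_dual_subset_cdual[OF K'] cdual_clinear_fun by blast
    ultimately show ?thesis
      using clinear_fun_large_on_short_vector[of \<phi> "real n + 1" y] by auto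
  qed
  then obtain \<phi> z where \<phi>: "\<And>n. \<phi> n \<in> K'" and norm_z: "\<And>n. norm (z n) = 1 / (real n + 1)"
    and large: "\<And>n. real n + 1 < cmod (\<phi> n (z n))"
    by metis
  have "(\<lambda>n. norm (z n)) \<longlonglongrightarrow> 0"
    using LIMSEQ_inverse_real_of_nat by (simp add: norm_z inverse_eq_divide add.commute)
  then have "z \<longlonglongrightarrow> 0"
    by (rule tendsto_norm_zero_cancel)
  then have "compact (insert 0 (range z))"
    using compactin_sequence_with_limit[of euclidean z 0 "range z"] by simp
  then obtain B where B: "\<forall>\<psi>\<in>K'. \<forall>k\<in>insert 0 (range z). cmod (\<psi> k) \<le> B"
    using compactin_dual_bounded_on_compact[OF K'] by blast
  obtain n :: nat where "B \<le> real n"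
    using real_arch_simple by blast
  moreover have "cmod (\<phi> n (z n)) \<le> B"
    using B \<phi>[of n] by blast
  ultimately show False
    using large[of n] by linarith
qed

section \<open>The two topologies on closed subspaces\<close>

lemma topology_generated_by_eqI:
  assumes "\<And>S. S \<in> \<S> \<Longrightarrow> openin (topology_generated_by \<T>) S"
    and "\<And>T. T \<in> \<T> \<Longrightarrow> openin (topology_generated_by \<S>) T"
  shows "topology_generated_by \<S> = topology_generated_by \<T>"
proof -
  have "generate_topology_on \<T> s" if "generate_topology_on \<S> s" for s
    by (rule generate_topology_on_coarsest[OF istopology_generate_topology_on _ that])
      (use assms(1) in \<open>simp add: openin_topology_generated_by_iff\<close>)
  moreover have "generate_topology_on \<S> s" if "generate_topology_on \<T> s" for s
    by (rule generate_topology_on_coarsest[OF istopology_generate_topology_on _ that])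
      (use assms(2) in \<open>simp add: openin_topology_generated_by_iff\<close>)
  ultimately show ?thesis
    unfolding topology_eq openin_topology_generated_by_iff by blast
qed

lemma csubspace_MaxA: "V \<in> MaxA \<Longrightarrow> csubspace V"
  unfolding MaxA_def by blast

lemma topspace_lower_vietoris: "topspace lower_vietoris = MaxA"
proof -
  have "MaxA = {V\<in>MaxA. V \<inter> UNIV \<noteq> {}}"
    using csubspace_0[OF csubspace_MaxA] by blast
  then have "MaxA \<in> {{V\<in>MaxA. V \<inter> U \<noteq> {}} | U. open U}"
    by (intro CollectI exI[of _ UNIV] conjI open_UNIV)
  then show ?thesis
    unfolding lower_vietoris_def topology_generated_by_topspace by auto
qed

lemma openin_lower_vietoris_subbasic:
  "open U \<Longrightarrow> openin lower_vietoris {V\<in>MaxA. V \<inter> U \<noteq> {}}"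
  unfolding lower_vietoris_def by (rule topology_generated_by_Basis) blast

lemma openin_annih_topology_subbasic:
  "compactin dual_topology K' \<Longrightarrow> openin annih_topology {V\<in>MaxA. annih V \<inter> K' = {}}"
  unfolding annih_topology_def by (rule topology_generated_by_Basis) blast

lemma finite_witnesses_of_annih_disjoint:
  fixes K' :: "('a::complex_normed_vector \<Rightarrow> complex) set"
  assumes K': "compactin dual_topology K'" and V: "csubspace V" and disjoint: "annih V \<inter> K' = {}"
  shows "\<exists>D. finite D \<and> D \<subseteq> V \<and> (\<forall>\<phi>\<in>K'. \<exists>v\<in>D. 1 < cmod (\<phi> v))"
proof -
  define W where "W v = {\<phi>\<in>cdual. \<phi> ` {v} \<subseteq> - cball 0 1}" for v :: 'a
  have "openin dual_topology (W v)" for v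
    unfolding W_def by (intro openin_dual_topology_subbasic) auto
  moreover have "K' \<subseteq> (\<Union>v\<in>V. W v)"
  proof
    fix \<phi> assume "\<phi> \<in> K'"
    then have "\<phi> \<in> cdual"
      using compactin_dual_subset_cdual[OF K'] by blast
    moreover obtain v where "v \<in> V" "\<phi> v \<noteq> 0"
      using disjoint \<open>\<phi> \<in> K'\<close> \<open>\<phi> \<in> cdual\<close> unfolding annih_def by blast
    moreover have "\<phi> (scaleC (2 / \<phi> v) v) = 2"
      using \<open>\<phi> v \<noteq> 0\<close> by (simp add: clinear_fun_scaleC[OF cdual_clinear_fun[OF \<open>\<phi> \<in> cdual\<close>]])
    ultimately have "\<phi> \<in> W (scaleC (2 / \<phi> v) v)"
      unfolding W_def by simp
    moreover have "scaleC (2 / \<phi> v) v \<in> V"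
      using csubspace_scaleC[OF V \<open>v \<in> V\<close>] .
    ultimately show "\<phi> \<in> (\<Union>v\<in>V. W v)"
      by blast
  qed
  ultimately obtain F where "finite F" "F \<subseteq> W ` V" "K' \<subseteq> \<Union>F"
    using compactinD[OF K', of "W ` V"] by blast
  then obtain D where "D \<subseteq> V" "finite D" and cover: "K' \<subseteq> (\<Union>v\<in>D. W v)"
    using finite_subset_image[of F W V] by blast
  have "\<exists>v\<in>D. 1 < cmod (\<phi> v)" if "\<phi> \<in> K'" for \<phi>
  proof -
    obtain v where "v \<in> D" "\<phi> \<in> W v"
      using cover \<open>\<phi> \<in> K'\<close> by blast
    then show ?thesis
      unfolding W_def by (auto simp: not_le)
  qed
  then show ?thesis
    using \<open>D \<subseteq> V\<close> \<open>finite D\<close> by blast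
qed

lemma cmod_less_one_near_annihilated:
  assumes "\<phi> \<in> annih V" and bound: "\<forall>y. cmod (\<phi> y) \<le> M * norm y" and "M > 0"
    and "w \<in> V" and "dist v w < 1 / M"
  shows "cmod (\<phi> v) < 1"
proof -
  have "\<phi> \<in> cdual" "\<phi> w = 0"
    using assms(1,4) unfolding annih_def by blast+
  then have "cmod (\<phi> v) = cmod (\<phi> (v - w))"
    by (simp add: clinear_fun_diff[OF cdual_clinear_fun])
  also have "\<dots> \<le> M * dist v w"
    using bound by (simp add: dist_norm)
  also have "\<dots> < 1"
    using \<open>dist v w < 1 / M\<close> \<open>M > 0\<close> by (simp add: field_simps)
  finally show ?thesis .
qed

lemma openin_lower_vietoris_annih_disjoint:
  fixes K' :: "('a::complex_normed_vector \<Rightarrow> complex) set"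
  assumes K': "compactin dual_topology K'"
  shows "openin lower_vietoris {V\<in>MaxA. annih V \<inter> K' = {}}"
proof (subst openin_subopen, intro ballI)
  fix V0 assume "V0 \<in> {V\<in>MaxA. annih V \<inter> K' = {}}"
  then have "V0 \<in> MaxA" and "annih V0 \<inter> K' = {}"
    by blast+
  then obtain D where "finite D" "D \<subseteq> V0" and D: "\<forall>\<phi>\<in>K'. \<exists>v\<in>D. 1 < cmod (\<phi> v)"
    using finite_witnesses_of_annih_disjoint[OF K' csubspace_MaxA[OF \<open>V0 \<in> MaxA\<close>]] by blast
  obtain M where "M > 0" and M: "\<forall>\<phi>\<in>K'. \<forall>y. cmod (\<phi> y) \<le> M * norm y"
    using compactin_dual_equibounded[OF K'] by blast
  define T where "T = (\<Inter>v\<in>D. {V\<in>MaxA. V \<inter> ball v (1 / M) \<noteq> {}}) \<inter> topspace lower_vietoris"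
  have "openin lower_vietoris T"
    unfolding T_def using \<open>finite D\<close> by (intro openin_INT openin_lower_vietoris_subbasic) simp_all
  moreover have "V0 \<inter> ball v (1 / M) \<noteq> {}" if "v \<in> D" for v
    using that \<open>D \<subseteq> V0\<close> \<open>M > 0\<close> centre_in_ball[of v "1 / M"] by auto
  then have "V0 \<in> T"
    using \<open>V0 \<in> MaxA\<close> unfolding T_def topspace_lower_vietoris by blast
  moreover have "annih V \<inter> K' = {}" if "V \<in> T" for V
  proof (rule ccontr)
    assume "annih V \<inter> K' \<noteq> {}"
    then obtain \<phi> v where "\<phi> \<in> annih V" "\<phi> \<in> K'" "v \<in> D" "1 < cmod (\<phi> v)"
      using D by blast
    moreover have "V \<inter> ball v (1 / M) \<noteq> {}"
      using \<open>V \<in> T\<close> \<open>v \<in> D\<close> unfolding T_def by blast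
    then obtain w where "w \<in> V" "dist v w < 1 / M"
      by auto
    moreover have "\<forall>y. cmod (\<phi> y) \<le> M * norm y"
      using M \<open>\<phi> \<in> K'\<close> by blast
    ultimately show False
      using cmod_less_one_near_annihilated[of \<phi> V M w v] \<open>M > 0\<close> by simp
  qed
  then have "T \<subseteq> {V\<in>MaxA. annih V \<inter> K' = {}}"
    unfolding T_def topspace_lower_vietoris by blast
  ultimately show "\<exists>T. openin lower_vietoris T \<and> V0 \<in> T \<and> T \<subseteq> {V\<in>MaxA. annih V \<inter> K' = {}}"
    by blast
qed

lemma openin_annih_topology_hitting:
  fixes U :: "'a::complex_normed_vector set"
  assumes "open U"
  shows "openin annih_topology {V\<in>MaxA. V \<inter> U \<noteq> {}}"
proof (subst openin_subopen, intro ballI)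
  fix V0 assume "V0 \<in> {V\<in>MaxA. V \<inter> U \<noteq> {}}"
  then obtain x where "x \<in> V0" "x \<in> U"
    by blast
  then obtain r where "r > 0" "ball x r \<subseteq> U"
    using \<open>open U\<close> open_contains_ball by blast
  define K' where "K' = {\<phi>\<in>cdual. \<phi> x = 1 \<and> (\<forall>y. cmod (\<phi> y) \<le> (1 / r) * norm y)}"
  define T where "T = {V\<in>MaxA. annih V \<inter> K' = {}}"
  have "compactin dual_topology K'"
    unfolding K'_def using \<open>r > 0\<close> by (intro compactin_dual_normalized_equibounded) simp
  then have "openin annih_topology T"
    unfolding T_def by (rule openin_annih_topology_subbasic)
  moreover have "V0 \<in> T"
    using \<open>V0 \<in> {V\<in>MaxA. V \<inter> U \<noteq> {}}\<close> \<open>x \<in> V0\<close> unfolding T_def K'_def annih_def by auto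
  moreover have "V \<inter> U \<noteq> {}" if "V \<in> T" for V
  proof
    assume "V \<inter> U = {}"
    then have "\<forall>v\<in>V. v \<notin> ball x r"
      using \<open>ball x r \<subseteq> U\<close> by blast
    then have "\<forall>v\<in>V. r \<le> norm (x - v)"
      by (simp add: dist_norm not_less)
    moreover have "csubspace V"
      using \<open>V \<in> T\<close> csubspace_MaxA unfolding T_def by blast
    ultimately obtain \<phi> where "\<phi> \<in> cdual" "\<phi> x = 1" "\<forall>v\<in>V. \<phi> v = 0"
      "\<forall>y. cmod (\<phi> y) \<le> (1 / r) * norm y"
      using cdual_separating_point_from_csubspace \<open>r > 0\<close> by blast
    then have "\<phi> \<in> annih V \<inter> K'"
      unfolding annih_def K'_def by blast
    then show False
      using \<open>V \<in> T\<close> unfolding T_def by blast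
  qed
  then have "T \<subseteq> {V\<in>MaxA. V \<inter> U \<noteq> {}}"
    unfolding T_def by blast
  ultimately show "\<exists>T. openin annih_topology T \<and> V0 \<in> T \<and> T \<subseteq> {V\<in>MaxA. V \<inter> U \<noteq> {}}"
    by blast
qed

theorem lemma7p13:
  shows "(lower_vietoris :: 'a::complex_normed_vector set topology) = annih_topology"
  unfolding lower_vietoris_def annih_topology_def
proof (rule topology_generated_by_eqI)
  fix S :: "'a set set" assume "S \<in> {{V\<in>MaxA. V \<inter> U \<noteq> {}} | U. open U}"
  then show "openin (topology_generated_by {{V\<in>MaxA. annih V \<inter> K' = {}} | K'. compactin dual_topology K'}) S"
    using openin_annih_topology_hitting unfolding annih_topology_def by blast
next
  fix T :: "'a set set" assume "T \<in> {{V\<in>MaxA. annih V \<inter> K' = {}} | K'. compactin dual_topology K'}"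
  then show "openin (topology_generated_by {{V\<in>MaxA. V \<inter> U \<noteq> {}} | U. open U}) T"
    using openin_lower_vietoris_annih_disjoint unfolding lower_vietoris_def by blast
qed

end
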